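(* Let $d\ge 3$, let $\mathcal M$ be a model of $\mathrm{PQM}_d$, and let $\varphi(x)$ be an $\mathcal L_d$-formula in the single free variable $x$ which is a finite conjunction of literals, each of the form $[t(x):p]$ or $\neg[t(x):p]$ with $p\in\mathbb H_d$ and $t(x)$ a term obtained from $x$ by applying finitely many function symbols $u_U$, $\pi_q$. If $\mathcal M\models\exists x\,\varphi(x)$, then $\mathcal H_d\models\exists x\,\varphi(x)$.
   Context: Notation. For $d\ge 1$, $\mathbb H_d$ is the set of complex linear subspaces of $\mathbb C^d$, ordered by inclusion $\le$, with $\top=\mathbb C^d$, $\bot=\{0\}$, $p^\bot$ the orthogonal complement, $p\wedge q=p\cap q$ and $p\vee q=p+q$. $\mathbb U_d$ is the set of unitary operators on $\mathbb C^d$, and for $U\in\mathbb U_d$, $p\in\mathbb H_d$, $U(p)=\{Uv: v\in p\}$. The Sasaki projection is $p\,\&\,q := q\cap(q^\bot+p)$. Subspaces $p,q$ are compatible iff $p=(p\wedge q)\vee(p\wedge q^\bot)$. Language $\mathcal L_d$: a first-order language without equality and without constants, having a unary function symbol $u_U$ for each $U\in\mathbb U_d$, a unary function symbol $\pi_q$ for each $q\in\mathbb H_d$, and a unary relation symbol $[\,\cdot:p]$ for each $p\in\mathbb H_d$. Theory $\mathrm{PQM}_d$ (over $\mathcal L_d$) has the following axioms, for all $p,q\in\mathbb H_d$ and $U\in\mathbb U_d$: ($\neg\bot$) $\exists x\,\neg[x:\bot]$; ($\top$) $\forall x\,[x:\top]$; ($\le$) if $p\le q$: $\forall x\,([x:p]\to[x:q])$;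 ($\wedge$) if $p,q$ are compatible: $\forall x\,([x:p]\wedge[x:q]\to[x:p\wedge q])$; ($\pi_i$) $\forall x\,([x:p]\to[\pi_q(x):p\,\&\,q])$; ($\pi_c$) if $p\le q$: $\forall x\,([\pi_p(\pi_q(x)):\bot]\to[\pi_p(x):\bot])$; ($\pi_\bot$) $\forall x\,([\pi_q(x):\bot]\to[x:q^\bot])$; ($u_i$) $\forall x\,([x:p]\to[u_U(x):U(p)])$; ($u_e$) $\forall x\,([u_U(x):p]\to[x:U^{-1}(p)])$. Hilbert model $\mathcal H_d$: the $\mathcal L_d$-structure with domain $\mathbb H_d$, $u_U^{\mathcal H_d}(x)=U(x)$, $\pi_q^{\mathcal H_d}(x)=x\,\&\,q$, and $[x:p]^{\mathcal H_d}$ holds iff $x\le p$. *)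

theory Defs
  imports "HOL-Analysis.Analysis"
begin

text \<open>Vectors of C^d are represented as complex ^ 'n with d = CARD('n).\<close>

type_synonym 'n cvec = "complex ^ 'n"
type_synonym 'n cmat = "complex ^ 'n ^ 'n"

definition csubspace :: "'n::finite cvec set \<Rightarrow> bool" where
  "csubspace S \<longleftrightarrow> 0 \<in> S \<and> (\<forall>x\<in>S. \<forall>y\<in>S. x + y \<in> S)
      \<and> (\<forall>c::complex. \<forall>x\<in>S. (\<chi> i. c * x $ i) \<in> S)"

definition cinner :: "'n::finite cvec \<Rightarrow> 'n cvec \<Rightarrow> complex" where
  "cinner x y = (\<Sum>i\<in>UNIV. cnj (x $ i) * y $ i)"

definition orth :: "'n::finite cvec set \<Rightarrow> 'n cvec set" where
  "orth p = {x. \<forall>y\<in>p. cinner y x = 0}"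

definition join :: "'n::finite cvec set \<Rightarrow> 'n cvec set \<Rightarrow> 'n cvec set" where
  "join p q = {a + b | a b. a \<in> p \<and> b \<in> q}"

definition sasaki :: "'n::finite cvec set \<Rightarrow> 'n cvec set \<Rightarrow> 'n cvec set" where
  "sasaki p q = q \<inter> join (orth q) p"

definition compatible :: "'n::finite cvec set \<Rightarrow> 'n cvec set \<Rightarrow> bool" where
  "compatible p q \<longleftrightarrow> p = join (p \<inter> q) (p \<inter> orth q)"

definition cadj :: "'n::finite cmat \<Rightarrow> 'n cmat" where
  "cadj U = (\<chi> i j. cnj (U $ j $ i))"

definition unitary :: "'n::finite cmat \<Rightarrow> bool" where
  "unitary U \<longleftrightarrow> U ** cadj U = mat 1 \<and> cadj U ** U = mat 1"

definition uimg :: "'n::finite cmat \<Rightarrow> 'n cvec set \<Rightarrow> 'n cvec set" where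
  "uimg U p = (\<lambda>v. U *v v) ` p"

definition Hbot :: "'n::finite cvec set" where "Hbot = {0}"
definition Htop :: "'n::finite cvec set" where "Htop = UNIV"

datatype 'n tm = Xvar | UApp "'n cmat" "'n tm" | PiApp "'n cvec set" "'n tm"

text \<open>Literals [t:p] (True) or not [t:p] (False).\<close>
datatype 'n lit = Lit bool "'n tm" "'n cvec set"

fun wf_tm :: "'n::finite tm \<Rightarrow> bool" where
  "wf_tm Xvar = True"
| "wf_tm (UApp U t) = (unitary U \<and> wf_tm t)"
| "wf_tm (PiApp q t) = (csubspace q \<and> wf_tm t)"

fun wf_lit :: "'n::finite lit \<Rightarrow> bool" where
  "wf_lit (Lit b t p) = (wf_tm t \<and> csubspace p)"

fun eval_tm :: "('n cmat \<Rightarrow> 'a \<Rightarrow> 'a) \<Rightarrow> ('n cvec set \<Rightarrow> 'a \<Rightarrow> 'a) \<Rightarrow> 'n tm \<Rightarrow> 'a \<Rightarrow> 'a" where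
  "eval_tm uI piI Xvar x = x"
| "eval_tm uI piI (UApp U t) x = uI U (eval_tm uI piI t x)"
| "eval_tm uI piI (PiApp q t) x = piI q (eval_tm uI piI t x)"

fun sat_lit :: "('n cmat \<Rightarrow> 'a \<Rightarrow> 'a) \<Rightarrow> ('n cvec set \<Rightarrow> 'a \<Rightarrow> 'a) \<Rightarrow> ('n cvec set \<Rightarrow> 'a \<Rightarrow> bool)
      \<Rightarrow> 'n lit \<Rightarrow> 'a \<Rightarrow> bool" where
  "sat_lit uI piI rel (Lit b t p) x = (rel p (eval_tm uI piI t x) = b)"

definition sat_conj :: "('n cmat \<Rightarrow> 'a \<Rightarrow> 'a) \<Rightarrow> ('n cvec set \<Rightarrow> 'a \<Rightarrow> 'a) \<Rightarrow> ('n cvec set \<Rightarrow> 'a \<Rightarrow> bool)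
      \<Rightarrow> 'n lit list \<Rightarrow> 'a \<Rightarrow> bool" where
  "sat_conj uI piI rel phi x = (\<forall>l\<in>set phi. sat_lit uI piI rel l x)"

text \<open>Models of PQM_d, with domain the type 'a. rel p x means [x:p].\<close>
definition PQM_model :: "('n::finite cmat \<Rightarrow> 'a \<Rightarrow> 'a) \<Rightarrow> ('n cvec set \<Rightarrow> 'a \<Rightarrow> 'a)
      \<Rightarrow> ('n cvec set \<Rightarrow> 'a \<Rightarrow> bool) \<Rightarrow> bool" where
  "PQM_model uI piI rel \<longleftrightarrow>
     (\<exists>x. \<not> rel Hbot x)
   \<and> (\<forall>x. rel Htop x)
   \<and> (\<forall>p q. csubspace p \<longrightarrow> csubspace q \<longrightarrow> p \<subseteq> q \<longrightarrow> (\<forall>x. rel p x \<longrightarrow> rel q x))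
   \<and> (\<forall>p q. csubspace p \<longrightarrow> csubspace q \<longrightarrow> compatible p q \<longrightarrow>
         (\<forall>x. rel p x \<and> rel q x \<longrightarrow> rel (p \<inter> q) x))
   \<and> (\<forall>p q. csubspace p \<longrightarrow> csubspace q \<longrightarrow> (\<forall>x. rel p x \<longrightarrow> rel (sasaki p q) (piI q x)))
   \<and> (\<forall>p q. csubspace p \<longrightarrow> csubspace q \<longrightarrow> p \<subseteq> q \<longrightarrow>
         (\<forall>x. rel Hbot (piI p (piI q x)) \<longrightarrow> rel Hbot (piI p x)))
   \<and> (\<forall>q. csubspace q \<longrightarrow> (\<forall>x. rel Hbot (piI q x) \<longrightarrow> rel (orth q) x))
   \<and> (\<forall>p U. csubspace p \<longrightarrow> unitary U \<longrightarrow> (\<forall>x. rel p x \<longrightarrow> rel (uimg U p) (uI U x)))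
   \<and> (\<forall>p U. csubspace p \<longrightarrow> unitary U \<longrightarrow> (\<forall>x. rel p (uI U x) \<longrightarrow> rel (uimg (cadj U) p) x))"

text \<open>The Hilbert model H_d (domain: the complex subspaces).\<close>
definition H_u :: "'n::finite cmat \<Rightarrow> 'n cvec set \<Rightarrow> 'n cvec set" where
  "H_u U x = uimg U x"
definition H_pi :: "'n::finite cvec set \<Rightarrow> 'n cvec set \<Rightarrow> 'n cvec set" where
  "H_pi q x = sasaki x q"
definition H_rel :: "'n::finite cvec set \<Rightarrow> 'n cvec set \<Rightarrow> bool" where
  "H_rel p x \<longleftrightarrow> x \<subseteq> p"

end

theory Submission
  imports Defs
begin

(* Let S be the intersection, over the positive literals [t:p] of phi, of the preimages of p
   under the linear map that t denotes in H_d (a composite of unitaries and orthogonal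
   projections). By construction S satisfies the positive literals in H_d. Suppose x satisfies
   phi in a model M. Truth of [t(x):p] pulls back along u_U and pi_q to [x : t^-1(p)], and the
   truths at x are closed under intersection, so [x:S] holds; a negative literal not [t:p] holds
   at S in H_d because [x:S] pushes forward to [t(x) : t(S)], so t(S) is not below p.

   The pull-back along pi_q and the closure under intersection are where d >= 3 is needed. By
   projecting onto orthogonal complements and inducting on dimension, both reduce to
   the claim that [x:p] and [x:q] for two distinct lines p, q force [x:0]. For lines, (pi_i),
   (pi_bot) and the compatibility of orthogonal subspaces show that [x : span n] follows from
   [x : span a] and [x : span b] whenever the projections of a and b onto the complement of n are
   orthogonal. In a real three-dimensional frame containing a and b, this rule yields, through
   points on a circle, pairs of true lines at ever larger angles, until two orthogonal ones are
   reached; these meet in 0. *)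

section \<open>Complex subspaces and orthogonal projections\<close>

abbreviation clinear :: "('n::finite cvec \<Rightarrow> 'n cvec) \<Rightarrow> bool" where
  "clinear \<equiv> Vector_Spaces.linear (*s) (*s)"

lemma csubspace_iff_subspace: "csubspace S \<longleftrightarrow> vec.subspace S"
  by (simp add: csubspace_def vec.subspace_def vector_scalar_mult_def)

lemma scaleR_eq_smult: "r *\<^sub>R x = complex_of_real r *s (x::'n::finite cvec)"
  by (simp add: vec_eq_iff) (simp add: scaleR_conv_of_real)

lemma subspace_if_vec_subspace: "vec.subspace S \<Longrightarrow> subspace (S :: 'n::finite cvec set)"
  by (simp add: vec.subspace_def subspace_def scaleR_eq_smult)

lemma cinner_add_left: "cinner (x + y) z = cinner x z + cinner y z"
  and cinner_add_right: "cinner x (y + z) = cinner x y + cinner x z"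
  and cinner_diff_left: "cinner (x - y) z = cinner x z - cinner y z"
  and cinner_diff_right: "cinner x (y - z) = cinner x y - cinner x z"
  and cinner_scale_left: "cinner (c *s x) y = cnj c * cinner x y"
  and cinner_scale_right: "cinner x (c *s y) = c * cinner x y"
  and cinner_zero_left [simp]: "cinner 0 y = 0"
  and cinner_zero_right [simp]: "cinner x 0 = 0"
  by (simp_all add: cinner_def algebra_simps sum.distrib sum_subtractf sum_distrib_left)

lemma cinner_commute: "cinner y x = cnj (cinner x y)"
  by (simp add: cinner_def mult.commute)

lemma Re_cinner: "Re (cinner x y) = x \<bullet> y"
  by (simp add: cinner_def inner_vec_def inner_complex_def)

lemma cinner_self: "cinner x x = complex_of_real (x \<bullet> x)"
  by (simp add: complex_eq_iff Re_cinner) (simp add: cinner_def)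

lemma cinner_self_eq_0 [simp]: "cinner x x = 0 \<longleftrightarrow> x = 0"
  by (simp add: cinner_self)

lemma cinner_eq_0_iff: "cinner x y = 0 \<longleftrightarrow> x \<bullet> y = 0 \<and> (\<i> *s x) \<bullet> y = 0"
  by (simp add: complex_eq_iff flip: Re_cinner) (simp add: cinner_scale_left)

lemma subspace_orth: "vec.subspace (orth p)"
  by (auto simp: vec.subspace_def orth_def cinner_add_right cinner_scale_right)

lemma orth_eq_real_orth:
  assumes "vec.subspace p"
  shows "orth p = {x. \<forall>y\<in>p. y \<bullet> x = 0}"
  using assms by (auto simp: orth_def cinner_eq_0_iff vec.subspace_scale)

lemma Int_orth_self: "vec.subspace p \<Longrightarrow> p \<inter> orth p = {0}"
  by (auto simp: orth_def vec.subspace_0)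

lemma orth_antimono: "p \<subseteq> q \<Longrightarrow> orth q \<subseteq> orth p"
  by (auto simp: orth_def)

lemma orthogonal_decomposition:
  assumes "vec.subspace p"
  obtains w r where "w \<in> p" "r \<in> orth p" "x = w + r"
proof -
  obtain w r where "w \<in> span p" "\<And>v. v \<in> span p \<Longrightarrow> orthogonal r v" "x = w + r"
    using orthogonal_subspace_decomp_exists by blast
  moreover have "span p = p"
    using subspace_if_vec_subspace[OF assms] by (simp add: span_eq_iff)
  ultimately show thesis
    using that[of w r] assms by (auto simp: orth_eq_real_orth orthogonal_def inner_commute)
qed

lemma orthogonal_decomposition_unique:
  assumes "vec.subspace p" "w \<in> p" "r \<in> orth p" "w' \<in> p" "r' \<in> orth p" "w + r = w' + r'"
  shows "w = w'"
proof -
  have "w - w' = r' - r"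
    using assms(6) by (simp add: algebra_simps)
  moreover have "w - w' \<in> p" "r' - r \<in> orth p"
    using assms by (simp_all add: vec.subspace_diff subspace_orth)
  ultimately have "w - w' \<in> p \<inter> orth p"
    by simp
  then show ?thesis
    using Int_orth_self[OF assms(1)] by simp
qed

lemma clinearI: "(\<And>x y. f (x + y) = f x + f y) \<Longrightarrow> (\<And>c x. f (c *s x) = c *s f x) \<Longrightarrow> clinear f"
  by (simp add: Vector_Spaces.linear_iff vec.vector_space_axioms)

definition proj :: "'n::finite cvec set \<Rightarrow> 'n cvec \<Rightarrow> 'n cvec" where
  "proj q x = (THE w. w \<in> q \<and> x - w \<in> orth q)"

context
  fixes q :: "'n::finite cvec set"
  assumes q: "vec.subspace q"
begin

lemma proj_in_orth: "proj q x \<in> q \<and> x - proj q x \<in> orth q"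
proof -
  obtain w r where wr: "w \<in> q" "r \<in> orth q" "x = w + r"
    using orthogonal_decomposition[OF q] .
  have "\<exists>!w. w \<in> q \<and> x - w \<in> orth q"
  proof
    show "w \<in> q \<and> x - w \<in> orth q"
      using wr by simp
    show "w' = w" if "w' \<in> q \<and> x - w' \<in> orth q" for w'
      using orthogonal_decomposition_unique[OF q, of w' "x - w'" w r] that wr by simp
  qed
  then show ?thesis
    unfolding proj_def by (rule theI')
qed

lemma proj_in: "proj q x \<in> q"
  using proj_in_orth by blast

lemma diff_proj_in_orth: "x - proj q x \<in> orth q"
  using proj_in_orth by blast

lemma proj_unique:
  assumes "w \<in> q" "x - w \<in> orth q"
  shows "proj q x = w"
  using orthogonal_decomposition_unique[OF q proj_in[of x] diff_proj_in_orth[of x] assms] by simp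

lemma proj_eq_self: "x \<in> q \<Longrightarrow> proj q x = x"
  by (rule proj_unique) (simp_all add: vec.subspace_0 subspace_orth)

lemma proj_eq_0: "x \<in> orth q \<Longrightarrow> proj q x = 0"
  by (rule proj_unique) (simp_all add: q vec.subspace_0)

lemma linear_proj: "clinear (proj q)"
proof (rule clinearI)
  show "proj q (x + y) = proj q x + proj q y" for x y
  proof (rule proj_unique)
    have "x + y - (proj q x + proj q y) = (x - proj q x) + (y - proj q y)"
      by (simp add: algebra_simps)
    also have "\<dots> \<in> orth q"
      by (intro vec.subspace_add subspace_orth diff_proj_in_orth)
    finally show "x + y - (proj q x + proj q y) \<in> orth q" .
  qed (simp add: q proj_in vec.subspace_add)
  show "proj q (c *s x) = c *s proj q x" for c x
  proof (rule proj_unique)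
    have "c *s x - c *s proj q x = c *s (x - proj q x)"
      by (simp add: vector_ssub_ldistrib)
    also have "\<dots> \<in> orth q"
      by (intro vec.subspace_scale subspace_orth diff_proj_in_orth)
    finally show "c *s x - c *s proj q x \<in> orth q" .
  qed (simp add: q proj_in vec.subspace_scale)
qed

lemma orth_orth: "orth (orth q) = q"
proof
  show "q \<subseteq> orth (orth q)"
  proof
    fix x assume "x \<in> q"
    then have "cinner x y = 0" if "y \<in> orth q" for y
      using that by (simp add: orth_def)
    then show "x \<in> orth (orth q)"
      using cinner_commute[of _ x] by (simp add: orth_def)
  qed
  show "orth (orth q) \<subseteq> q"
  proof
    fix x assume x: "x \<in> orth (orth q)"
    define r where "r = x - proj q x"
    have r: "r \<in> orth q"
      by (simp add: r_def diff_proj_in_orth)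
    have "cinner r x = 0"
      using x r by (simp add: orth_def)
    moreover have "cinner r (proj q x) = 0"
      using r proj_in[of x] cinner_commute[of "proj q x" r] by (simp add: orth_def)
    ultimately have "cinner r r = 0"
      by (simp add: r_def cinner_diff_right)
    then show "x \<in> q"
      using proj_in[of x] by (simp add: r_def)
  qed
qed

lemma range_proj: "range (proj q) = q"
  using proj_in proj_eq_self by (metis image_subsetI rangeI subsetI subset_antisym)

lemma sasaki_eq_image_proj: "vec.subspace x \<Longrightarrow> sasaki x q = proj q ` x"
proof safe
  fix z assume "z \<in> sasaki x q"
  then obtain a b where z: "z \<in> q" "a \<in> orth q" "b \<in> x" "z = a + b"
    by (auto simp: sasaki_def join_def)
  have "b - z \<in> orth q"
    using vec.subspace_neg[OF subspace_orth z(2)] z(4) by simp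
  then have "proj q b = z"
    using proj_unique z(1) by blast
  with z(3) show "z \<in> proj q ` x" by blast
next
  fix b assume "b \<in> x"
  moreover have "proj q b - b \<in> orth q"
    using vec.subspace_neg[OF subspace_orth diff_proj_in_orth, of b] by simp
  moreover have "proj q b = (proj q b - b) + b" by simp
  ultimately show "proj q b \<in> sasaki x q"
    unfolding sasaki_def join_def using proj_in by blast
qed

end

lemma compatible_if_subset_orth:
  assumes "vec.subspace p" "vec.subspace q" "p \<subseteq> orth q"
  shows "compatible p q"
proof -
  have "p \<inter> q = {0}"
    using assms Int_orth_self[of q] by (auto simp: vec.subspace_0)
  moreover have "p \<inter> orth q = p"
    using assms(3) by blast
  ultimately show ?thesis
    by (simp add: compatible_def join_def)
qed

lemma Int_eq_0_if_subset_orth: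
  "vec.subspace p \<Longrightarrow> vec.subspace q \<Longrightarrow> p \<subseteq> orth q \<Longrightarrow> p \<inter> q = {0}"
  using Int_orth_self[of q] by (auto simp: vec.subspace_0)

lemma orth_span_singleton: "orth (vec.span {n}) = {x. cinner n x = 0}"
  by (auto simp: orth_def vec.span_singleton cinner_scale_left)

lemma span_singleton_subset_orth: "cinner u v = 0 \<Longrightarrow> vec.span {u} \<subseteq> orth (vec.span {v})"
  unfolding orth_span_singleton using cinner_commute[of v u]
  by (auto simp: vec.span_singleton cinner_scale_right)

lemma image_proj_span_singleton:
  "vec.subspace s \<Longrightarrow> proj s ` vec.span {b} = vec.span {proj s b}"
  using vec.linear_span_image[OF linear_proj, of s "{b}"] by simp

lemma image_proj_orth_Int:
  assumes t: "vec.subspace t" and q: "vec.subspace q" and "t \<subseteq> q"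
  shows "proj (orth t) ` p \<inter> proj (orth t) ` q \<subseteq> proj (orth t) ` (p \<inter> q)"
proof safe
  fix x x' assume x: "x \<in> p" "x' \<in> q" and eq: "proj (orth t) x = proj (orth t) x'"
  have "x - proj (orth t) x \<in> q" "x' - proj (orth t) x' \<in> q"
    using diff_proj_in_orth[OF subspace_orth[of t]] orth_orth[OF t] \<open>t \<subseteq> q\<close> by auto
  then have "(x - proj (orth t) x) - (x' - proj (orth t) x') + x' \<in> q"
    using vec.subspace_add[OF q vec.subspace_diff[OF q] x(2)] by blast
  then have "x \<in> q"
    using eq by simp
  with x(1) show "proj (orth t) x \<in> proj (orth t) ` (p \<inter> q)"
    by blast
qed

lemma image_proj_orth_disjoint:
  assumes "vec.subspace t" "vec.subspace p" "vec.subspace q" "t \<subseteq> q" "p \<inter> q = {0}"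
  shows "proj (orth t) ` p \<inter> proj (orth t) ` q = {0}"
proof -
  have "proj (orth t) 0 = 0"
    by (rule vec.linear_0[OF linear_proj[OF subspace_orth]])
  then have "0 \<in> proj (orth t) ` p" "0 \<in> proj (orth t) ` q"
    using vec.subspace_0[OF assms(2)] vec.subspace_0[OF assms(3)] by (metis image_eqI)+
  moreover have "proj (orth t) ` p \<inter> proj (orth t) ` q \<subseteq> {0}"
    using image_proj_orth_Int[OF assms(1,3,4), of p] assms(5) \<open>proj (orth t) 0 = 0\<close> by simp
  ultimately show ?thesis
    by blast
qed

lemma image_proj_orth_subset:
  assumes t: "vec.subspace t" and q: "vec.subspace q" and "t \<subseteq> q"
  shows "proj (orth t) ` q \<subseteq> q"
proof clarify
  fix x assume "x \<in> q"
  moreover have "x - proj (orth t) x \<in> q"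
    using diff_proj_in_orth[OF subspace_orth[of t]] orth_orth[OF t] \<open>t \<subseteq> q\<close> by auto
  ultimately have "x - (x - proj (orth t) x) \<in> q"
    using q vec.subspace_diff by blast
  then show "proj (orth t) x \<in> q"
    by simp
qed

lemma dim_image_proj_orth_less:
  assumes t: "vec.subspace t" and q: "vec.subspace q" and "t \<subseteq> q" and a: "a \<in> t" "a \<noteq> 0"
  shows "vec.dim (proj (orth t) ` q) < vec.dim q"
proof (rule vec.dim_psubset)
  have "a \<notin> orth t"
    using Int_orth_self[OF t] a by blast
  then have "a \<notin> proj (orth t) ` q"
    using proj_in[OF subspace_orth[of t]] by blast
  then have "proj (orth t) ` q \<subset> q"
    using image_proj_orth_subset[OF assms(1-3)] assms(3) a(1) by blast
  moreover have "vec.subspace (proj (orth t) ` q)"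
    by (rule vec.linear_subspace_image[OF linear_proj[OF subspace_orth[of t]] q])
  ultimately show "vec.span (proj (orth t) ` q) \<subset> vec.span q"
    using q by (simp only: vec.span_eq_iff[THEN iffD2])
qed

lemma proj_orth_line:
  assumes "n \<noteq> 0"
  shows "proj (orth (vec.span {n})) x = x - (cinner n x / cinner n n) *s n"
proof (rule proj_unique[OF subspace_orth])
  have "cinner n n \<noteq> 0"
    using assms by simp
  then have "cinner n (x - (cinner n x / cinner n n) *s n) = 0"
    by (simp add: cinner_diff_right cinner_scale_right)
  then show "x - (cinner n x / cinner n n) *s n \<in> orth (vec.span {n})"
    unfolding orth_span_singleton by simp
  have "(cinner n x / cinner n n) *s n \<in> vec.span {n}"
    by (intro vec.span_scale vec.span_base) simp
  then show "x - (x - (cinner n x / cinner n n) *s n) \<in> orth (orth (vec.span {n}))"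
    unfolding orth_orth[OF vec.subspace_span] by simp
qed

lemma cinner_proj_orth_line:
  assumes "n \<noteq> 0"
  defines "s \<equiv> orth (vec.span {n})"
  shows "cinner (proj s a) (proj s b) = (cinner a b * cinner n n - cinner a n * cinner n b) / cinner n n"
proof -
  have "cnj (cinner n a) = cinner a n" "cnj (cinner n n) = cinner n n"
    using cinner_commute[of n] by (auto simp: cinner_self)
  then show ?thesis
    using assms by (simp add: s_def proj_orth_line cinner_diff_left cinner_diff_right
        cinner_scale_left cinner_scale_right field_simps)
qed

section \<open>Perpendicularity-closed sets of directions in real 3-space\<close>

text \<open>The condition on \<open>w\<close> says that the components of \<open>x\<close> and \<open>z\<close> orthogonal to \<open>w\<close> are
  orthogonal to each other. In a model of PQM, the real directions whose lines hold at a fixed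
  element form such a set (\<open>perp_closed_rel_lines\<close>).\<close>

definition perp_closed :: "'a::real_inner set \<Rightarrow> bool" where
  "perp_closed D \<longleftrightarrow>
     (\<forall>x\<in>D. \<forall>z\<in>D. \<forall>w. w \<noteq> 0 \<and> (x \<bullet> z) * (w \<bullet> w) = (x \<bullet> w) * (w \<bullet> z) \<longrightarrow> w \<in> D)"

text \<open>The squared tangent of the angle between \<open>a\<close> and \<open>b\<close>; it is \<open>0\<close> when \<open>a \<bullet> b = 0\<close>.\<close>

definition tan_sq :: "'a::real_inner \<Rightarrow> 'a \<Rightarrow> real" where
  "tan_sq a b = ((a \<bullet> a) * (b \<bullet> b) - (a \<bullet> b)\<^sup>2) / (a \<bullet> b)\<^sup>2"

lemma perp_closedD:
  "perp_closed D \<Longrightarrow> x \<in> D \<Longrightarrow> z \<in> D \<Longrightarrow> w \<noteq> 0 \<Longrightarrow> (x \<bullet> z) * (w \<bullet> w) = (x \<bullet> w) * (w \<bullet> z)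
    \<Longrightarrow> w \<in> D"
  unfolding perp_closed_def by blast

lemma perp_closed_scaleR:
  "perp_closed D \<Longrightarrow> x \<in> D \<Longrightarrow> x \<noteq> 0 \<Longrightarrow> c \<noteq> 0 \<Longrightarrow> c *\<^sub>R x \<in> D"
  by (erule perp_closedD) (simp_all add: algebra_simps)

lemma inner_orthogonal_combination:
  fixes a d e :: "'a::real_inner"
  assumes "a \<bullet> d = 0" "a \<bullet> e = 0" "d \<bullet> e = 0"
  shows "(a + y *\<^sub>R d + z *\<^sub>R e) \<bullet> (a + y' *\<^sub>R d + z' *\<^sub>R e)
           = a \<bullet> a + y * y' * (d \<bullet> d) + z * z' * (e \<bullet> e)"
  using assms by (simp add: inner_add_left inner_add_right inner_commute algebra_simps)

text \<open>The points \<open>a + y d + z e\<close> allowed here form the circle with diameter \<open>[a, a + d]\<close> in the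
  plane \<open>a + span {d, e}\<close>.\<close>

lemma perp_closed_circle:
  fixes a d e :: "'a::real_inner"
  assumes D: "perp_closed D" "a \<in> D" "a + d \<in> D" and "a \<noteq> 0"
    and orth: "a \<bullet> d = 0" "a \<bullet> e = 0" "d \<bullet> e = 0"
    and circle: "y\<^sup>2 * (d \<bullet> d) + z\<^sup>2 * (e \<bullet> e) = y * (d \<bullet> d)"
  shows "a + y *\<^sub>R d + z *\<^sub>R e \<in> D"
proof (rule perp_closedD[OF D])
  let ?n = "a + y *\<^sub>R d + z *\<^sub>R e"
  have an: "a \<bullet> ?n = a \<bullet> a" and aad: "a \<bullet> (a + d) = a \<bullet> a"
    using orth by (simp_all add: inner_add_right)
  have "?n \<bullet> (a + d) = a \<bullet> a + y * (d \<bullet> d)"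
    using inner_orthogonal_combination[OF orth, of y z 1 0] by simp
  moreover have "?n \<bullet> ?n = a \<bullet> a + y * (d \<bullet> d)"
    using inner_orthogonal_combination[OF orth, of y z y z] circle by (simp add: power2_eq_square)
  ultimately show "(a \<bullet> (a + d)) * (?n \<bullet> ?n) = (a \<bullet> ?n) * (?n \<bullet> (a + d))"
    by (simp add: an aad)
  show "?n \<noteq> 0"
    using an \<open>a \<noteq> 0\<close> by auto
qed

lemma perp_closed_orthogonal_frame:
  fixes a b :: "real^3"
  assumes D: "perp_closed D" "a \<in> D" "b \<in> D" and ab: "a \<bullet> b \<noteq> 0"
  obtains d e where "a + d \<in> D" "a \<bullet> d = 0" "a \<bullet> e = 0" "d \<bullet> e = 0"
    "e \<bullet> e = (a \<bullet> a) * (b \<bullet> b) - (a \<bullet> b)\<^sup>2" "d \<bullet> d = tan_sq a b * (a \<bullet> a)"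
proof -
  define c where "c = (a \<bullet> a) / (a \<bullet> b)"
  define d where "d = c *\<^sub>R b - a"
  define e where "e = cross3 a b"
  have "c \<noteq> 0" "b \<noteq> 0"
    using ab by (auto simp: c_def)
  then have "a + d \<in> D"
    using perp_closed_scaleR[OF D(1,3)] by (simp add: d_def)
  moreover have "a \<bullet> d = 0"
    using ab by (simp add: d_def c_def inner_diff_right)
  moreover have "a \<bullet> e = 0" "b \<bullet> e = 0"
    by (simp_all add: e_def dot_cross_self)
  then have "d \<bullet> e = 0"
    by (simp add: d_def inner_diff_left)
  moreover have "e \<bullet> e = (a \<bullet> a) * (b \<bullet> b) - (a \<bullet> b)\<^sup>2"
    using norm_cross_dot[of a b] by (simp add: e_def power2_norm_eq_inner power_mult_distrib)
  moreover have "d \<bullet> d = tan_sq a b * (a \<bullet> a)"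
    using ab by (simp add: d_def c_def tan_sq_def inner_diff_left inner_diff_right inner_commute
        field_simps power2_eq_square)
  ultimately show thesis
    using that \<open>a \<bullet> e = 0\<close> by blast
qed

lemma perp_closed_circle_pair:
  fixes a b :: "real^3"
  assumes D: "perp_closed D" "a \<in> D" "b \<in> D" and ab: "a \<bullet> b \<noteq> 0" and "tan_sq a b > 0"
    and y: "0 \<le> y" "y \<le> 1"
  obtains n1 n2 where "n1 \<in> D" "n2 \<in> D"
    "n1 \<bullet> n1 = (1 + y * tan_sq a b) * (a \<bullet> a)" "n2 \<bullet> n2 = (1 + y * tan_sq a b) * (a \<bullet> a)"
    "n1 \<bullet> n2 = (1 + (2 * y\<^sup>2 - y) * tan_sq a b) * (a \<bullet> a)"
proof -
  obtain d e where ad: "a + d \<in> D" and orth: "a \<bullet> d = 0" "a \<bullet> e = 0" "d \<bullet> e = 0"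
    and ee: "e \<bullet> e = (a \<bullet> a) * (b \<bullet> b) - (a \<bullet> b)\<^sup>2" and dd: "d \<bullet> d = tan_sq a b * (a \<bullet> a)"
    using perp_closed_orthogonal_frame[OF D ab] .
  have "a \<noteq> 0"
    using ab by auto
  have "e \<bullet> e > 0"
    using \<open>tan_sq a b > 0\<close> ab by (simp add: ee tan_sq_def zero_less_divide_iff)
  define z where "z = sqrt ((d \<bullet> d) * y * (1 - y) / (e \<bullet> e))"
  have z: "z * z * (e \<bullet> e) = (d \<bullet> d) * y * (1 - y)"
    using \<open>e \<bullet> e > 0\<close> y by (simp add: z_def)
  define n1 where "n1 = a + y *\<^sub>R d + z *\<^sub>R e"
  define n2 where "n2 = a + y *\<^sub>R d + (- z) *\<^sub>R e"
  have "n1 \<in> D" "n2 \<in> D"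
    unfolding n1_def n2_def using z
    by (intro perp_closed_circle[OF D(1,2) ad \<open>a \<noteq> 0\<close> orth]; simp add: power2_eq_square algebra_simps)+
  moreover have "n1 \<bullet> n1 = (1 + y * tan_sq a b) * (a \<bullet> a)"
    "n2 \<bullet> n2 = (1 + y * tan_sq a b) * (a \<bullet> a)"
    "n1 \<bullet> n2 = (1 + (2 * y\<^sup>2 - y) * tan_sq a b) * (a \<bullet> a)"
    unfolding n1_def n2_def inner_orthogonal_combination[OF orth] mult_minus_left mult_minus_right
      minus_minus diff_conv_add_uminus[symmetric] z dd
    by (simp_all add: power2_eq_square algebra_simps)
  ultimately show thesis
    by (rule that)
qed

lemma perp_closed_tan_sq_step:
  fixes a b :: "real^3"
  assumes "perp_closed D" "a \<in> D" "b \<in> D" "a \<bullet> b \<noteq> 0" "tan_sq a b > 0"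
  obtains a' b' where "a' \<in> D" "b' \<in> D" "a' \<bullet> b' \<noteq> 0"
    "tan_sq a' b' = tan_sq a b + (tan_sq a b)\<^sup>2 / 4"
proof -
  obtain n1 n2 where n: "n1 \<in> D" "n2 \<in> D"
    "n1 \<bullet> n1 = (1 + tan_sq a b / 2) * (a \<bullet> a)" "n2 \<bullet> n2 = (1 + tan_sq a b / 2) * (a \<bullet> a)"
    "n1 \<bullet> n2 = a \<bullet> a"
    using perp_closed_circle_pair[OF assms, of "1/2"] by (auto simp: power2_eq_square)
  define t where "t = tan_sq a b"
  define A where "A = a \<bullet> a"
  have "A \<noteq> 0"
    using assms(4) by (auto simp: A_def)
  have "tan_sq n1 n2 = ((1 + t / 2) * A * ((1 + t / 2) * A) - A * A) / (A * A)"
    unfolding tan_sq_def[of n1 n2] n(3-5) t_def[symmetric] A_def[symmetric] by (simp add: power2_eq_square)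
  also have "\<dots> = t + t\<^sup>2 / 4"
    using \<open>A \<noteq> 0\<close> by (simp add: field_simps power2_eq_square)
  finally show thesis
    using n \<open>A \<noteq> 0\<close> by (intro that[of n1 n2]) (simp_all add: t_def A_def)
qed

lemma perp_closed_orthogonal_if_tan_sq_ge_8:
  fixes a b :: "real^3"
  assumes "perp_closed D" "a \<in> D" "b \<in> D" "a \<bullet> b \<noteq> 0" "tan_sq a b \<ge> 8"
  shows "\<exists>x\<in>D. \<exists>z\<in>D. x \<bullet> z = 0"
proof -
  define t where "t = tan_sq a b"
  define s where "s = sqrt (1 - 8 / t)"
  define y where "y = (1 + s) / 4"
  have "t \<ge> 8"
    using assms(5) by (simp add: t_def)
  then have "0 \<le> 1 - 8 / t" "1 - 8 / t \<le> 1"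
    by simp_all
  then have "0 \<le> s" "s \<le> 1" "s\<^sup>2 = 1 - 8 / t"
    by (simp_all add: s_def)
  then have "0 \<le> y" "y \<le> 1" and y: "(2 * y\<^sup>2 - y) * t = - 1"
    using \<open>t \<ge> 8\<close> by (simp_all add: y_def power2_eq_square field_simps)
  have "tan_sq a b > 0"
    using \<open>t \<ge> 8\<close> by (simp add: t_def)
  obtain n1 n2 where "n1 \<in> D" "n2 \<in> D" "n1 \<bullet> n2 = (1 + (2 * y\<^sup>2 - y) * tan_sq a b) * (a \<bullet> a)"
    using perp_closed_circle_pair[OF assms(1-4) \<open>tan_sq a b > 0\<close> \<open>0 \<le> y\<close> \<open>y \<le> 1\<close>] by blast
  then show ?thesis
    using y by (auto simp: t_def)
qed

lemma perp_closed_tan_sq_unbounded: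
  fixes a b :: "real^3"
  assumes D: "perp_closed D" "a \<in> D" "b \<in> D" and ab: "a \<bullet> b \<noteq> 0" and t: "tan_sq a b > 0"
  shows "\<exists>a'\<in>D. \<exists>b'\<in>D. a' \<bullet> b' \<noteq> 0 \<and> tan_sq a' b' \<ge> tan_sq a b + real k * (tan_sq a b)\<^sup>2 / 4"
proof (induction k)
  case 0
  then show ?case
    using D ab by auto
next
  case (Suc k)
  then obtain a' b' where a'b': "a' \<in> D" "b' \<in> D" "a' \<bullet> b' \<noteq> 0"
    and ge: "tan_sq a' b' \<ge> tan_sq a b + real k * (tan_sq a b)\<^sup>2 / 4"
    by blast
  have "real k * (tan_sq a b)\<^sup>2 / 4 \<ge> 0"
    by simp
  then have "tan_sq a' b' \<ge> tan_sq a b"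
    using ge by linarith
  then have "(tan_sq a' b')\<^sup>2 \<ge> (tan_sq a b)\<^sup>2" "tan_sq a' b' > 0"
    using t by (auto intro: power_mono)
  moreover obtain a'' b'' where "a'' \<in> D" "b'' \<in> D" "a'' \<bullet> b'' \<noteq> 0"
    "tan_sq a'' b'' = tan_sq a' b' + (tan_sq a' b')\<^sup>2 / 4"
    using perp_closed_tan_sq_step[OF D(1) a'b'] calculation(2) by blast
  moreover have "real (Suc k) * (tan_sq a b)\<^sup>2 / 4 = real k * (tan_sq a b)\<^sup>2 / 4 + (tan_sq a b)\<^sup>2 / 4"
    by (simp add: field_simps)
  ultimately have "tan_sq a'' b'' \<ge> tan_sq a b + real (Suc k) * (tan_sq a b)\<^sup>2 / 4"
    using ge by linarith
  with \<open>a'' \<in> D\<close> \<open>b'' \<in> D\<close> \<open>a'' \<bullet> b'' \<noteq> 0\<close> show ?case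
    by blast
qed

lemma perp_closed_has_orthogonal_pair:
  fixes a b :: "real^3"
  assumes D: "perp_closed D" "a \<in> D" "b \<in> D" and indep: "(a \<bullet> b)\<^sup>2 < (a \<bullet> a) * (b \<bullet> b)"
  shows "\<exists>x\<in>D. \<exists>z\<in>D. x \<bullet> z = 0"
proof (cases "a \<bullet> b = 0")
  case True
  with D show ?thesis by blast
next
  case False
  define t where "t = tan_sq a b"
  have "t > 0"
    using indep False by (simp add: t_def tan_sq_def)
  obtain k :: nat where "32 / t\<^sup>2 \<le> real k"
    using real_arch_simple by blast
  then have "8 \<le> t + real k * t\<^sup>2 / 4"
    using \<open>t > 0\<close> by (simp add: field_simps)
  then obtain a' b' where "a' \<in> D" "b' \<in> D" "a' \<bullet> b' \<noteq> 0" "tan_sq a' b' \<ge> 8"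
    using perp_closed_tan_sq_unbounded[OF D False, of k] \<open>t > 0\<close> unfolding t_def by fastforce
  then show ?thesis
    using perp_closed_orthogonal_if_tan_sq_ge_8[OF D(1)] by blast
qed

section \<open>Two complex lines in a real frame\<close>

lemma span_singleton_scale: "c \<noteq> 0 \<Longrightarrow> vec.span {c *s v} = vec.span {v}"
  using vec.span_image_scale[of "{v}" "\<lambda>_. c"] by simp

lemma cinner_self_norm: "cinner x x = complex_of_real ((norm x)\<^sup>2)"
  by (simp add: cinner_self power2_norm_eq_inner)

definition cnormalize :: "'n::finite cvec \<Rightarrow> 'n cvec" where
  "cnormalize x = complex_of_real (inverse (norm x)) *s x"

lemma cinner_cnormalize: "x \<noteq> 0 \<Longrightarrow> cinner (cnormalize x) (cnormalize x) = 1"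
proof -
  have "cinner (c *s x) (c *s x) = cnj c * c * cinner x x" for c
    by (simp add: cinner_scale_left cinner_scale_right)
  then show "x \<noteq> 0 \<Longrightarrow> ?thesis"
    by (simp add: cnormalize_def cinner_self_norm power2_eq_square field_simps)
qed

lemma scale_norm_cnormalize: "complex_of_real (norm x) *s cnormalize x = x"
  by (cases "x = 0") (simp_all add: cnormalize_def vector_smult_assoc flip: of_real_mult)

lemma span_cnormalize: "x \<noteq> 0 \<Longrightarrow> vec.span {cnormalize x} = vec.span {x}"
  by (simp add: cnormalize_def span_singleton_scale)

lemma exists_orthogonal_vector:
  fixes u v :: "'n::finite cvec"
  assumes "CARD('n) \<ge> 3"
  obtains e :: "'n cvec" where "e \<noteq> 0" "cinner u e = 0" "cinner v e = 0"
proof -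
  define S where "S = {u, \<i> *s u, v, \<i> *s v}"
  have "dim S \<le> card S"
    by (rule dim_le_card[OF span_superset]) (simp add: S_def)
  also have "\<dots> \<le> 4"
    unfolding S_def by (rule card_insert_le_m1; simp add: card_insert_le_m1)+
  also have "4 < DIM('n cvec)"
    using assms by simp
  finally obtain e where e: "e \<noteq> 0" "\<And>y. y \<in> span S \<Longrightarrow> orthogonal e y"
    using orthogonal_to_subspace_exists by blast
  have "y \<bullet> e = 0" if "y \<in> S" for y
    using e(2)[OF span_base[OF that]] by (simp add: orthogonal_def inner_commute)
  then show thesis
    using e(1) by (intro that) (auto simp: S_def cinner_eq_0_iff)
qed

definition orthonormal3 :: "'n::finite cvec \<Rightarrow> 'n cvec \<Rightarrow> 'n cvec \<Rightarrow> bool" where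
  "orthonormal3 e1 e2 e3 \<longleftrightarrow> cinner e1 e1 = 1 \<and> cinner e2 e2 = 1 \<and> cinner e3 e3 = 1 \<and>
     cinner e1 e2 = 0 \<and> cinner e1 e3 = 0 \<and> cinner e2 e3 = 0"

definition frame_embed :: "'n::finite cvec \<Rightarrow> 'n cvec \<Rightarrow> 'n cvec \<Rightarrow> real^3 \<Rightarrow> 'n cvec" where
  "frame_embed e1 e2 e3 x =
     complex_of_real (x$1) *s e1 + complex_of_real (x$2) *s e2 + complex_of_real (x$3) *s e3"

lemma cinner_frame_embed:
  assumes "orthonormal3 e1 e2 e3"
  shows "cinner (frame_embed e1 e2 e3 x) (frame_embed e1 e2 e3 y) = complex_of_real (x \<bullet> y)"
proof -
  have "cinner e2 e1 = 0" "cinner e3 e1 = 0" "cinner e3 e2 = 0"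
    using assms cinner_commute[of e2 e1] cinner_commute[of e3 e1] cinner_commute[of e3 e2]
    by (auto simp: orthonormal3_def)
  with assms show ?thesis
    by (simp add: orthonormal3_def frame_embed_def cinner_add_left cinner_add_right cinner_scale_left
        cinner_scale_right inner_vec_def sum_3)
qed

text \<open>Gram-Schmidt, with the phase of \<open>e2\<close> chosen so that \<open>b\<close> gets real coordinates.\<close>

lemma two_lines_real_coordinates:
  assumes "a \<noteq> 0" "b \<notin> vec.span {a}"
  obtains e1 e2 :: "'n::finite cvec" and r s :: real
  where "cinner e1 e1 = 1" "cinner e2 e2 = 1" "cinner e1 e2 = 0" "s > 0"
    "vec.span {a} = vec.span {e1}"
    "vec.span {b} = vec.span {complex_of_real r *s e1 + complex_of_real s *s e2}"
proof -
  define e1 where "e1 = cnormalize a"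
  define g where "g = cinner e1 b"
  define w where "w = b - g *s e1"
  have e1: "cinner e1 e1 = 1" "vec.span {a} = vec.span {e1}"
    using assms(1) by (simp_all add: e1_def cinner_cnormalize span_cnormalize)
  have "cinner e1 w = 0"
    by (simp add: w_def cinner_diff_right cinner_scale_right e1 g_def)
  have "w \<noteq> 0"
  proof
    assume "w = 0"
    then have "b = g *s e1"
      by (simp add: w_def)
    also have "\<dots> \<in> vec.span {a}"
      unfolding e1(2) by (intro vec.span_scale vec.span_base) simp
    finally show False
      using assms(2) by simp
  qed
  define ph where "ph = cis (Arg g)"
  define e2 where "e2 = cnj ph *s cnormalize w"
  have ph: "cnj ph * ph = 1" "complex_of_real (cmod g) * ph = g"
    using rcis_cmod_Arg[of g] by (simp_all add: ph_def cis_cnj cis_mult rcis_def)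
  have "cinner e2 e2 = ph * (cnj ph * cinner (cnormalize w) (cnormalize w))"
    by (simp add: e2_def cinner_scale_left cinner_scale_right)
  then have "cinner e2 e2 = 1"
    using cinner_cnormalize[OF \<open>w \<noteq> 0\<close>] ph(1) by (simp add: mult.commute)
  moreover have "cinner e1 e2 = 0"
    by (simp add: e2_def cnormalize_def cinner_scale_right \<open>cinner e1 w = 0\<close>)
  moreover have "vec.span {b} = vec.span {complex_of_real (cmod g) *s e1 + complex_of_real (norm w) *s e2}"
  proof -
    have "ph *s (complex_of_real (cmod g) *s e1 + complex_of_real (norm w) *s e2)
        = (complex_of_real (cmod g) * ph) *s e1 + (cnj ph * ph) *s (complex_of_real (norm w) *s cnormalize w)"
      by (simp add: e2_def vector_add_ldistrib vector_smult_assoc mult_ac)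
    also have "\<dots> = b"
      using ph by (simp add: scale_norm_cnormalize w_def)
    finally show ?thesis
      using ph(1) span_singleton_scale[of ph] by fastforce
  qed
  ultimately show thesis
    using e1 \<open>w \<noteq> 0\<close> by (intro that) simp_all
qed

lemma two_lines_in_real_frame:
  fixes a b :: "'n::finite cvec"
  assumes "CARD('n) \<ge> 3" "a \<noteq> 0" "b \<notin> vec.span {a}"
  obtains e1 e2 e3 :: "'n cvec" and A B :: "real^3" where "orthonormal3 e1 e2 e3"
    "vec.span {a} = vec.span {frame_embed e1 e2 e3 A}" "vec.span {b} = vec.span {frame_embed e1 e2 e3 B}"
    "(A \<bullet> B)\<^sup>2 < (A \<bullet> A) * (B \<bullet> B)"
proof -
  obtain e1 e2 r s where e12: "cinner e1 e1 = 1" "cinner e2 e2 = 1" "cinner e1 e2 = 0" "s > 0"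
    and ab: "vec.span {a} = vec.span {e1}"
      "vec.span {b} = vec.span {complex_of_real r *s e1 + complex_of_real s *s e2}"
    by (rule two_lines_real_coordinates[OF assms(2,3)])
  obtain e where e: "e \<noteq> 0" "cinner e1 e = 0" "cinner e2 e = 0"
    by (rule exists_orthogonal_vector[OF assms(1)])
  define e3 where "e3 = cnormalize e"
  let ?A = "vector [1, 0, 0] :: real^3" and ?B = "vector [r, s, 0] :: real^3"
  show thesis
  proof (rule that)
    show "orthonormal3 e1 e2 e3"
      using e12 e cinner_cnormalize[OF e(1)]
      by (simp add: orthonormal3_def e3_def cnormalize_def cinner_scale_right)
    show "vec.span {a} = vec.span {frame_embed e1 e2 e3 ?A}"
      "vec.span {b} = vec.span {frame_embed e1 e2 e3 ?B}"
      using ab by (simp_all add: frame_embed_def)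
    show "(?A \<bullet> ?B)\<^sup>2 < (?A \<bullet> ?A) * (?B \<bullet> ?B)"
      using \<open>s > 0\<close> by (simp add: inner_vec_def sum_3 power2_eq_square)
  qed
qed

section \<open>Consequences of the axioms of PQM\<close>

locale pqm_model =
  fixes uI :: "'n::finite cmat \<Rightarrow> 'a \<Rightarrow> 'a"
    and piI :: "'n cvec set \<Rightarrow> 'a \<Rightarrow> 'a"
    and rel :: "'n cvec set \<Rightarrow> 'a \<Rightarrow> bool"
  assumes PQM: "PQM_model uI piI rel"
begin

lemma rel_UNIV: "rel UNIV x"
  and rel_mono: "vec.subspace p \<Longrightarrow> vec.subspace q \<Longrightarrow> p \<subseteq> q \<Longrightarrow> rel p x \<Longrightarrow> rel q x"
  and rel_Int_compatible: "vec.subspace p \<Longrightarrow> vec.subspace q \<Longrightarrow> compatible p q \<Longrightarrow>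
      rel p x \<Longrightarrow> rel q x \<Longrightarrow> rel (p \<inter> q) x"
  and rel_pi: "vec.subspace p \<Longrightarrow> vec.subspace q \<Longrightarrow> rel p x \<Longrightarrow> rel (sasaki p q) (piI q x)"
  and rel_pi_pi_bot: "vec.subspace p \<Longrightarrow> vec.subspace q \<Longrightarrow> p \<subseteq> q \<Longrightarrow>
      rel {0} (piI p (piI q x)) \<Longrightarrow> rel {0} (piI p x)"
  and rel_orth_if_pi_bot: "vec.subspace q \<Longrightarrow> rel {0} (piI q x) \<Longrightarrow> rel (orth q) x"
  and rel_u: "vec.subspace p \<Longrightarrow> unitary U \<Longrightarrow> rel p x \<Longrightarrow> rel (uimg U p) (uI U x)"
  and rel_u_inv: "vec.subspace p \<Longrightarrow> unitary U \<Longrightarrow> rel p (uI U x) \<Longrightarrow> rel (uimg (cadj U) p) x"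
  using PQM unfolding PQM_model_def Hbot_def Htop_def csubspace_iff_subspace by meson+

lemma rel_image_proj:
  assumes "vec.subspace p" "vec.subspace q" "rel p x"
  shows "rel (proj q ` p) (piI q x)"
  using rel_pi[OF assms] sasaki_eq_image_proj[OF assms(2,1)] by simp

lemma rel_if_rel_pi:
  assumes s: "vec.subspace s" and w: "vec.subspace w" and "orth s \<subseteq> w" and "rel w (piI s x)"
  shows "rel w x"
proof -
  define r where "r = orth w"
  have r: "vec.subspace r" "r \<subseteq> s" "orth r = w"
    using orth_antimono[OF \<open>orth s \<subseteq> w\<close>] by (simp_all add: r_def subspace_orth orth_orth s w)
  have "proj r ` w = {0}"
    using proj_eq_0[OF r(1)] vec.subspace_0[OF w] r(3) by force
  then have "rel {0} (piI r (piI s x))"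
    using rel_image_proj[OF w r(1) \<open>rel w (piI s x)\<close>] by simp
  then have "rel {0} (piI r x)"
    using rel_pi_pi_bot[OF r(1) s r(2)] by blast
  then show ?thesis
    using rel_orth_if_pi_bot[OF r(1)] r(3) by simp
qed

lemma rel_bot_if_subset_orth:
  assumes "vec.subspace p" "vec.subspace q" "p \<subseteq> orth q" "rel p x" "rel q x"
  shows "rel {0} x"
  using rel_Int_compatible[OF assms(1,2) compatible_if_subset_orth[OF assms(1-3)] assms(4,5)]
    Int_eq_0_if_subset_orth[OF assms(1-3)] by simp

lemma rel_orth_if_proj_orthogonal:
  assumes "vec.subspace s" "vec.subspace p" "vec.subspace q" "proj s ` p \<subseteq> orth (proj s ` q)"
    and "rel p x" "rel q x"
  shows "rel (orth s) x"
proof -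
  have "vec.subspace (proj s ` p)" "vec.subspace (proj s ` q)"
    using vec.linear_subspace_image[OF linear_proj[OF assms(1)]] assms(2,3) by blast+
  then have "rel {0} (piI s x)"
    using rel_bot_if_subset_orth assms(4) rel_image_proj[OF assms(2,1,5)] rel_image_proj[OF assms(3,1,6)]
    by blast
  then show ?thesis
    using rel_orth_if_pi_bot[OF assms(1)] by blast
qed

lemma rel_if_pi_orth_bot: "vec.subspace t \<Longrightarrow> rel {0} (piI (orth t) x) \<Longrightarrow> rel t x"
  using rel_orth_if_pi_bot[OF subspace_orth, of t x] orth_orth[of t] by simp

lemma rel_line_if_orthogonal_after_proj:
  assumes "rel (vec.span {a}) x" "rel (vec.span {b}) x" "n \<noteq> 0"
    and "cinner a b * cinner n n = cinner a n * cinner n b"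
  shows "rel (vec.span {n}) x"
proof -
  let ?s = "orth (vec.span {n})"
  have "cinner (proj ?s a) (proj ?s b) = 0"
    using cinner_proj_orth_line[OF assms(3)] assms(4) by simp
  then have "proj ?s ` vec.span {a} \<subseteq> orth (proj ?s ` vec.span {b})"
    by (simp add: image_proj_span_singleton subspace_orth span_singleton_subset_orth)
  then have "rel (orth ?s) x"
    using rel_orth_if_proj_orthogonal[OF subspace_orth vec.subspace_span vec.subspace_span] assms(1,2)
    by blast
  then show ?thesis
    by (simp add: orth_orth)
qed

lemma perp_closed_rel_lines:
  assumes "orthonormal3 e1 e2 e3"
  shows "perp_closed {v. rel (vec.span {frame_embed e1 e2 e3 v}) x}"
  unfolding perp_closed_def
proof (intro ballI allI impI, clarify)
  fix u v w :: "real^3"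
  let ?E = "frame_embed e1 e2 e3"
  assume u: "rel (vec.span {?E u}) x" and v: "rel (vec.span {?E v}) x"
    and "w \<noteq> 0" and uvw: "(u \<bullet> v) * (w \<bullet> w) = (u \<bullet> w) * (w \<bullet> v)"
  have "?E w \<noteq> 0"
    using \<open>w \<noteq> 0\<close> cinner_frame_embed[OF assms, of w w] by auto
  moreover have "cinner (?E u) (?E v) * cinner (?E w) (?E w) = cinner (?E u) (?E w) * cinner (?E w) (?E v)"
    unfolding cinner_frame_embed[OF assms] of_real_mult[symmetric] uvw ..
  ultimately show "rel (vec.span {?E w}) x"
    by (rule rel_line_if_orthogonal_after_proj[OF u v])
qed

end

locale pqm_model3 = pqm_model uI piI rel
  for uI :: "'n::finite cmat \<Rightarrow> 'a \<Rightarrow> 'a" and piI and rel +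
  assumes dim3: "CARD('n) \<ge> 3"
begin

lemma rel_bot_if_lines_disjoint:
  assumes "vec.span {a} \<inter> vec.span {b} = {0}" and a: "rel (vec.span {a}) x" and b: "rel (vec.span {b}) x"
  shows "rel {0} x"
proof (cases "a = 0 \<or> b = 0")
  case True
  with a b show ?thesis by auto
next
  case False
  then have "b \<notin> vec.span {a}"
    using assms(1) vec.span_base[of b "{b}"] by auto
  then obtain e1 e2 e3 A B where frame: "orthonormal3 e1 e2 e3"
    "vec.span {a} = vec.span {frame_embed e1 e2 e3 A}" "vec.span {b} = vec.span {frame_embed e1 e2 e3 B}"
    and indep: "(A \<bullet> B)\<^sup>2 < (A \<bullet> A) * (B \<bullet> B)"
    using two_lines_in_real_frame[OF dim3] False by metis
  let ?D = "{v. rel (vec.span {frame_embed e1 e2 e3 v}) x}"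
  have "A \<in> ?D" "B \<in> ?D"
    using a b frame by simp_all
  then obtain v w where "v \<in> ?D" "w \<in> ?D" "v \<bullet> w = 0"
    using perp_closed_has_orthogonal_pair[OF perp_closed_rel_lines[OF frame(1)] _ _ indep] by blast
  moreover have "vec.span {frame_embed e1 e2 e3 v} \<subseteq> orth (vec.span {frame_embed e1 e2 e3 w})"
    using \<open>v \<bullet> w = 0\<close> by (intro span_singleton_subset_orth) (simp add: cinner_frame_embed[OF frame(1)])
  ultimately show ?thesis
    using rel_bot_if_subset_orth[OF vec.subspace_span vec.subspace_span] by blast
qed

lemma rel_bot_if_disjoint_from_line:
  "vec.subspace p \<Longrightarrow> p \<inter> vec.span {b} = {0} \<Longrightarrow> rel p x \<Longrightarrow> rel (vec.span {b}) x \<Longrightarrow> rel {0} x"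
proof (induction "vec.dim p" arbitrary: p b x rule: less_induct)
  case less
  show ?case
  proof (cases "p = {0}")
    case True
    with less.prems show ?thesis by simp
  next
    case False
    then obtain a where a: "a \<in> p" "a \<noteq> 0"
      using vec.subspace_0[OF less.prems(1)] by blast
    let ?t = "vec.span {a}"
    let ?P = "proj (orth ?t) ` p"
    have t: "vec.subspace ?t" "?t \<subseteq> p"
      using a(1) less.prems(1) by (simp_all add: vec.span_minimal)
    have "proj (orth ?t) ` vec.span {b} \<inter> ?P = {0}"
      using less.prems(2) by (intro image_proj_orth_disjoint[OF t(1) vec.subspace_span less.prems(1) t(2)]) blast
    then have "?P \<inter> vec.span {proj (orth ?t) b} = {0}"
      unfolding image_proj_span_singleton[OF subspace_orth] by blast
    moreover have "vec.dim ?P < vec.dim p"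
      using dim_image_proj_orth_less[OF t(1) less.prems(1) t(2)] a vec.span_base by blast
    moreover have "vec.subspace ?P"
      by (rule vec.linear_subspace_image[OF linear_proj[OF subspace_orth] less.prems(1)])
    moreover have "rel ?P (piI (orth ?t) x)"
      by (rule rel_image_proj[OF less.prems(1) subspace_orth less.prems(3)])
    moreover have "rel (vec.span {proj (orth ?t) b}) (piI (orth ?t) x)"
      using rel_image_proj[OF vec.subspace_span subspace_orth less.prems(4)]
      by (simp add: image_proj_span_singleton[OF subspace_orth])
    ultimately have "rel {0} (piI (orth ?t) x)"
      using less.hyps by blast
    then have "rel ?t x"
      by (rule rel_if_pi_orth_bot[OF t(1)])
    moreover have "?t \<inter> vec.span {b} = {0}"
      using t(2) less.prems(2) vec.span_zero by auto
    ultimately show ?thesis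
      using rel_bot_if_lines_disjoint less.prems(4) by blast
  qed
qed

lemma rel_bot_if_disjoint:
  "vec.subspace p \<Longrightarrow> vec.subspace q \<Longrightarrow> p \<inter> q = {0} \<Longrightarrow> rel p x \<Longrightarrow> rel q x \<Longrightarrow> rel {0} x"
proof (induction "vec.dim q" arbitrary: p q x rule: less_induct)
  case less
  show ?case
  proof (cases "q = {0}")
    case True
    with less.prems show ?thesis by simp
  next
    case False
    then obtain b where b: "b \<in> q" "b \<noteq> 0"
      using vec.subspace_0[OF less.prems(2)] by blast
    let ?t = "vec.span {b}"
    let ?P = "proj (orth ?t) ` p" and ?Q = "proj (orth ?t) ` q"
    have t: "vec.subspace ?t" "?t \<subseteq> q"
      using b(1) less.prems(2) by (simp_all add: vec.span_minimal)
    have "?P \<inter> ?Q = {0}"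
      by (rule image_proj_orth_disjoint[OF t(1) less.prems(1,2) t(2) less.prems(3)])
    moreover have "vec.dim ?Q < vec.dim q"
      using dim_image_proj_orth_less[OF t(1) less.prems(2) t(2)] b vec.span_base by blast
    moreover have "vec.subspace ?P" "vec.subspace ?Q"
      using vec.linear_subspace_image[OF linear_proj[OF subspace_orth]] less.prems(1,2) by blast+
    moreover have "rel ?P (piI (orth ?t) x)" "rel ?Q (piI (orth ?t) x)"
      using rel_image_proj[OF _ subspace_orth] less.prems(1,2,4,5) by blast+
    ultimately have "rel {0} (piI (orth ?t) x)"
      using less.hyps by blast
    then have "rel ?t x"
      by (rule rel_if_pi_orth_bot[OF t(1)])
    moreover have "p \<inter> ?t = {0}"
      using t(2) less.prems(3) vec.span_zero by auto
    ultimately show ?thesis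
      using rel_bot_if_disjoint_from_line less.prems(1,4) by blast
  qed
qed

lemma rel_Int:
  assumes p: "vec.subspace p" and q: "vec.subspace q" and "rel p x" "rel q x"
  shows "rel (p \<inter> q) x"
proof -
  let ?w = "p \<inter> q"
  let ?P = "proj (orth ?w) ` p" and ?Q = "proj (orth ?w) ` q"
  have w: "vec.subspace ?w"
    using p q by (rule vec.subspace_inter)
  have "proj (orth ?w) ` ?w \<subseteq> {0}"
    using proj_eq_0[OF subspace_orth] orth_orth[OF w] by auto
  then have "?P \<inter> ?Q \<subseteq> {0}"
    using image_proj_orth_Int[OF w q, of p] by blast
  moreover have "vec.subspace ?P" "vec.subspace ?Q"
    using vec.linear_subspace_image[OF linear_proj[OF subspace_orth]] p q by blast+
  ultimately have "?P \<inter> ?Q = {0}"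
    using vec.subspace_0 by blast
  moreover have "rel ?P (piI (orth ?w) x)" "rel ?Q (piI (orth ?w) x)"
    using rel_image_proj[OF _ subspace_orth] p q assms(3,4) by blast+
  ultimately have "rel {0} (piI (orth ?w) x)"
    using rel_bot_if_disjoint \<open>vec.subspace ?P\<close> \<open>vec.subspace ?Q\<close> by blast
  then show ?thesis
    by (rule rel_if_pi_orth_bot[OF w])
qed

lemma rel_vimage_proj_if_rel_pi:
  assumes q: "vec.subspace q" and p: "vec.subspace p" and "rel p (piI q x)"
  shows "rel (proj q -` p) x"
proof -
  have "rel q (piI q x)"
    using rel_image_proj[OF vec.subspace_UNIV q rel_UNIV] range_proj[OF q] by simp
  then have "rel (p \<inter> q) (piI q x)"
    using rel_Int[OF p q \<open>rel p (piI q x)\<close>] by simp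
  moreover have V: "vec.subspace (proj q -` p)"
    by (rule vec.linear_subspace_vimage[OF linear_proj[OF q] p])
  moreover have "p \<inter> q \<subseteq> proj q -` p"
    using proj_eq_self[OF q] by auto
  ultimately have "rel (proj q -` p) (piI q x)"
    using rel_mono[OF vec.subspace_inter[OF p q] V] by blast
  moreover have "orth q \<subseteq> proj q -` p"
    using proj_eq_0[OF q] vec.subspace_0[OF p] by auto
  ultimately show ?thesis
    using rel_if_rel_pi[OF q V] by blast
qed

end

section \<open>Terms as linear maps\<close>

primrec tm_map :: "'n::finite tm \<Rightarrow> 'n cvec \<Rightarrow> 'n cvec" where
  "tm_map Xvar = (\<lambda>v. v)"
| "tm_map (UApp U t) = (\<lambda>v. U *v tm_map t v)"
| "tm_map (PiApp q t) = (\<lambda>v. proj q (tm_map t v))"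

lemma linear_tm_map: "wf_tm t \<Longrightarrow> clinear (tm_map t)"
proof (induction t)
  case Xvar
  then show ?case by (simp add: vec.linear_ident)
next
  case (UApp U t)
  then have "clinear (tm_map t)"
    by simp
  then show ?case
    using Vector_Spaces.linear_compose[OF _ matrix_vector_mul_linear_gen[of U]] by (simp add: o_def)
next
  case (PiApp q t)
  then have "clinear (tm_map t)" "clinear (proj q)"
    by (simp_all add: linear_proj csubspace_iff_subspace)
  then show ?case
    using Vector_Spaces.linear_compose by (simp add: o_def)
qed

lemma subspace_image_tm_map: "wf_tm t \<Longrightarrow> vec.subspace x \<Longrightarrow> vec.subspace (tm_map t ` x)"
  by (rule vec.linear_subspace_image[OF linear_tm_map])

lemma eval_tm_Hilbert: "wf_tm t \<Longrightarrow> vec.subspace x \<Longrightarrow> eval_tm H_u H_pi t x = tm_map t ` x"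
proof (induction t)
  case Xvar
  then show ?case by simp
next
  case (UApp U t)
  then show ?case by (simp add: H_u_def uimg_def image_image)
next
  case (PiApp q t)
  then have "vec.subspace q" "vec.subspace (tm_map t ` x)"
    by (simp_all add: subspace_image_tm_map csubspace_iff_subspace)
  with PiApp show ?case
    by (simp add: H_pi_def sasaki_eq_image_proj image_image)
qed

lemma uimg_cadj: "unitary U \<Longrightarrow> uimg (cadj U) p = (*v) U -` p"
  unfolding unitary_def uimg_def
  by (auto simp: matrix_vector_mul_assoc image_iff) (metis matrix_vector_mul_assoc matrix_vector_mul_lid)

fun positive_space :: "'n::finite lit list \<Rightarrow> 'n cvec set" where
  "positive_space [] = UNIV"
| "positive_space (Lit b t p # phi) =
     (if b then tm_map t -` p \<inter> positive_space phi else positive_space phi)"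

lemma subspace_positive_space: "\<forall>l\<in>set phi. wf_lit l \<Longrightarrow> vec.subspace (positive_space phi)"
proof (induction phi rule: positive_space.induct)
  case 1
  then show ?case by (simp add: vec.subspace_UNIV)
next
  case (2 b t p phi)
  then show ?case
    by (simp add: vec.subspace_inter vec.linear_subspace_vimage linear_tm_map csubspace_iff_subspace)
qed

lemma image_tm_map_positive_space: "Lit True t p \<in> set phi \<Longrightarrow> tm_map t ` positive_space phi \<subseteq> p"
  by (induction phi rule: positive_space.induct) auto

lemma (in pqm_model) rel_image_tm_map:
  "wf_tm t \<Longrightarrow> vec.subspace r \<Longrightarrow> rel r a \<Longrightarrow> rel (tm_map t ` r) (eval_tm uI piI t a)"
proof (induction t)
  case Xvar
  then show ?case by simp
next
  case (UApp U t)
  then show ?case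
    using rel_u[OF subspace_image_tm_map, of t r U] by (simp add: uimg_def image_image)
next
  case (PiApp q t)
  then show ?case
    using rel_image_proj[OF subspace_image_tm_map, of t r q] by (simp add: image_image csubspace_iff_subspace)
qed

context pqm_model3
begin

lemma rel_vimage_tm_map:
  "wf_tm t \<Longrightarrow> vec.subspace p \<Longrightarrow> rel p (eval_tm uI piI t a) \<Longrightarrow> rel (tm_map t -` p) a"
proof (induction t arbitrary: p)
  case Xvar
  then show ?case by simp
next
  case (UApp U t)
  then have "wf_tm t" "unitary U"
    by simp_all
  then have "rel ((*v) U -` p) (eval_tm uI piI t a)"
    using rel_u_inv[OF UApp.prems(2) _ UApp.prems(3)[simplified]] by (simp add: uimg_cadj)
  then have "rel (tm_map t -` ((*v) U -` p)) a"
    by (rule UApp.IH[OF \<open>wf_tm t\<close> vec.subspace_vimage[OF UApp.prems(2)]])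
  then show ?case
    by (simp add: vimage_def)
next
  case (PiApp q t)
  then have "wf_tm t" "vec.subspace q"
    by (simp_all add: csubspace_iff_subspace)
  then have "rel (proj q -` p) (eval_tm uI piI t a)"
    using rel_vimage_proj_if_rel_pi PiApp.prems by simp
  then have "rel (tm_map t -` (proj q -` p)) a"
    by (rule PiApp.IH[OF \<open>wf_tm t\<close> vec.linear_subspace_vimage[OF linear_proj[OF \<open>vec.subspace q\<close>] PiApp.prems(2)]])
  then show ?case
    by (simp add: vimage_def)
qed

lemma rel_positive_space:
  "\<forall>l\<in>set phi. wf_lit l \<Longrightarrow> sat_conj uI piI rel phi a \<Longrightarrow> rel (positive_space phi) a"
proof (induction phi rule: positive_space.induct)
  case 1
  then show ?case by (simp add: rel_UNIV)
next
  case (2 b t p phi)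
  then have IH: "rel (positive_space phi) a" and wf: "wf_tm t" "vec.subspace p"
    by (cases b; simp add: sat_conj_def csubspace_iff_subspace)+
  show ?case
  proof (cases b)
    case True
    then have "rel (tm_map t -` p) a"
      using "2.prems"(2) rel_vimage_tm_map[OF wf] by (simp add: sat_conj_def)
    then show ?thesis
      using True rel_Int[OF vec.linear_subspace_vimage[OF linear_tm_map[OF wf(1)] wf(2)]
          subspace_positive_space _ IH] "2.prems"(1) by simp
  next
    case False
    with IH show ?thesis by simp
  qed
qed

lemma Hilbert_sat_positive_space:
  assumes wf: "\<forall>l\<in>set phi. wf_lit l" and sat: "sat_conj uI piI rel phi a"
  shows "sat_conj H_u H_pi H_rel phi (positive_space phi)"
  unfolding sat_conj_def
proof
  fix l assume "l \<in> set phi"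
  moreover obtain b t p where "l = Lit b t p"
    by (cases l)
  ultimately have l: "l = Lit b t p" "Lit b t p \<in> set phi" and t: "wf_tm t" "vec.subspace p"
    using wf by (auto simp: csubspace_iff_subspace)
  let ?S = "positive_space phi"
  have S: "vec.subspace ?S" "rel ?S a"
    using subspace_positive_space[OF wf] rel_positive_space[OF wf sat] .
  show "sat_lit H_u H_pi H_rel l ?S"
  proof (cases b)
    case True
    then have "tm_map t ` ?S \<subseteq> p"
      using image_tm_map_positive_space l(2) by simp
    with True show ?thesis
      using l(1) eval_tm_Hilbert[OF t(1) S(1)] by (simp add: H_rel_def)
  next
    case False
    then have "\<not> rel p (eval_tm uI piI t a)"
      using sat l by (auto simp: sat_conj_def)
    then have "\<not> tm_map t ` ?S \<subseteq> p"
      using rel_mono[OF subspace_image_tm_map[OF t(1) S(1)] t(2)] rel_image_tm_map[OF t(1) S] by blast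
    with False show ?thesis
      using l(1) eval_tm_Hilbert[OF t(1) S(1)] by (simp add: H_rel_def)
  qed
qed

end

theorem mainTheorem12:
  fixes uI :: "'n::finite cmat \<Rightarrow> 'a \<Rightarrow> 'a"
    and piI :: "'n cvec set \<Rightarrow> 'a \<Rightarrow> 'a"
    and rel :: "'n cvec set \<Rightarrow> 'a \<Rightarrow> bool"
    and phi :: "'n lit list"
  assumes "CARD('n) \<ge> 3"
    and "PQM_model uI piI rel"
    and "\<forall>l\<in>set phi. wf_lit l"
    and "\<exists>x. sat_conj uI piI rel phi x"
  shows "\<exists>x. csubspace x \<and> sat_conj H_u H_pi H_rel phi x"
proof -
  interpret pqm_model3 uI piI rel
    using assms(1,2) by unfold_locales
  obtain a where "sat_conj uI piI rel phi a"
    using assms(4) by blast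
  then show ?thesis
    using Hilbert_sat_positive_space subspace_positive_space assms(3)
    by (auto simp: csubspace_iff_subspace)
qed

end
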